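(* Let $A,B\in\mathbb{R}^{n\times n}$ be symmetric matrices. Suppose one of the following holds: (S1) $I_{\succeq}(A,B)$ contains more than one point; (S2) $I_{\succeq}(B,A)$ contains more than one point; (S3) $Q(A)\cap Q(B)=N(A)\cap N(B)$ and $\dim\{N(A)\cap N(B)\}\neq n-2$. Then $A$ and $B$ are simultaneously diagonalizable via congruence.
   Context: $I_{\succeq}(A,B)=\{\sigma\in\mathbb{R}: A+\sigma B\succeq 0\}$ (positive semidefinite), $Q(A)=\{v\in\mathbb{R}^n: v^TAv=0\}$, $N(A)=\{v: Av=0\}$. $A$ and $B$ are simultaneously diagonalizable via congruence if there is a nonsingular matrix $C$ such that both $C^TAC$ and $C^TBC$ are diagonal. *)

theory Defs
  imports "HOL-Analysis.Analysis"
begin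

definition symmetric_mat :: "real^'n^'n \<Rightarrow> bool" where
  "symmetric_mat M \<longleftrightarrow> transpose M = M"

definition psd :: "real^'n^'n \<Rightarrow> bool" where
  "psd M \<longleftrightarrow> (\<forall>x. x \<bullet> (M *v x) \<ge> 0)"

definition I_psd :: "real^'n^'n \<Rightarrow> real^'n^'n \<Rightarrow> real set" where
  "I_psd A B = {\<sigma>. psd (A + \<sigma> *\<^sub>R B)}"

definition Qset :: "real^'n^'n \<Rightarrow> (real^'n) set" where
  "Qset A = {v. v \<bullet> (A *v v) = 0}"

definition Nset :: "real^'n^'n \<Rightarrow> (real^'n) set" where
  "Nset A = {v. A *v v = 0}"

definition diagonal_mat :: "real^'n^'n \<Rightarrow> bool" where
  "diagonal_mat M \<longleftrightarrow> (\<forall>i j. i \<noteq> j \<longrightarrow> M $ i $ j = 0)"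

definition simul_diag_congruence :: "real^'n^'n \<Rightarrow> real^'n^'n \<Rightarrow> bool" where
  "simul_diag_congruence A B \<longleftrightarrow>
     (\<exists>C::real^'n^'n. invertible C \<and> diagonal_mat (transpose C ** A ** C) \<and> diagonal_mat (transpose C ** B ** C))"

end

theory Submission
  imports Defs
begin

text \<open>If a nontrivial member \<open>P = a A + b B\<close> of the pencil is positive semidefinite and all its
  isotropic vectors lie in the common kernel \<open>W\<close> of \<open>A\<close> and \<open>B\<close>, then \<open>P\<close> is definite on \<open>W\<^sup>\<bottom>\<close>.
  Maximising Rayleigh quotients \<open>x\<^sup>T M x / x\<^sup>T P x\<close> on smaller and smaller subspaces then yields a
  basis of \<open>W\<^sup>\<bottom>\<close> conjugate for \<open>P\<close> and a second member \<open>M\<close> of the pencil, hence for \<open>A\<close> and \<open>B\<close>;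
  any basis of \<open>W\<close> completes it to a congruence diagonalising both.

  Under (S1) or (S2) the sum of two distinct semidefinite members of the pencil is such a \<open>P\<close>.
  Under (S3) the joint numerical range \<open>{(x\<^sup>T A x, x\<^sup>T B x) | x \<in> W\<^sup>\<bottom>}\<close> is a convex cone by
  Dines' theorem and misses \<open>0\<close> except at \<open>x = 0\<close>. When \<open>dim W\<^sup>\<bottom> \<noteq> 2\<close> it is also pointed: two
  values cancelling each other would, after a rotation of the pencil, give a form changing sign on
  the isotropic cone of another one, which in dimension at least three forces a common isotropic
  vector. A line through \<open>0\<close> separating \<open>0\<close> from the cone then provides \<open>P\<close>.\<close>

abbreviation quad_form :: "real^'n^'n \<Rightarrow> real^'n \<Rightarrow> real" where
  "quad_form M x \<equiv> x \<bullet> (M *v x)"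

definition conjugate_set :: "real^'n^'n \<Rightarrow> (real^'n) set \<Rightarrow> bool" where
  "conjugate_set M T \<longleftrightarrow> pairwise (\<lambda>u v. u \<bullet> (M *v v) = 0) T"

section \<open>Quadratic forms of symmetric matrices\<close>

lemma symmetric_mat_inner_commute:
  assumes "symmetric_mat M"
  shows "x \<bullet> (M *v y) = y \<bullet> (M *v x)"
proof -
  have "x \<bullet> (M *v y) = (transpose M *v x) \<bullet> y"
    by (simp add: dot_lmul_matrix vector_transpose_matrix)
  with assms show ?thesis by (simp add: symmetric_mat_def inner_commute)
qed

lemma symmetric_mat_lincomb:
  assumes "symmetric_mat A" "symmetric_mat B"
  shows "symmetric_mat (a *\<^sub>R A + b *\<^sub>R B)"
  using assms unfolding symmetric_mat_def by (simp add: transpose_def vec_eq_iff)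

lemma matrix_vector_mult_lincomb:
  fixes A B :: "real^'n^'n"
  shows "(a *\<^sub>R A + b *\<^sub>R B) *v v = a *\<^sub>R (A *v v) + b *\<^sub>R (B *v v)"
  by (simp add: matrix_vector_mult_add_rdistrib scaleR_matrix_vector_assoc)

lemma inner_matrix_vector_lincomb:
  fixes A B :: "real^'n^'n"
  shows "u \<bullet> ((a *\<^sub>R A + b *\<^sub>R B) *v v) = a * (u \<bullet> (A *v v)) + b * (u \<bullet> (B *v v))"
  by (simp add: matrix_vector_mult_lincomb inner_add_right)

lemma quad_form_scaleR: "quad_form M (r *\<^sub>R x) = r\<^sup>2 * quad_form M x"
  by (simp add: matrix_vector_mult_scaleR power2_eq_square)

lemma quad_form_lincomb2:
  assumes "symmetric_mat M"
  shows "quad_form M (a *\<^sub>R x + b *\<^sub>R y)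
     = a\<^sup>2 * quad_form M x + 2 * a * b * (x \<bullet> (M *v y)) + b\<^sup>2 * quad_form M y"
  using symmetric_mat_inner_commute[OF assms, of y x]
  by (simp add: matrix_vector_right_distrib matrix_vector_mult_scaleR inner_add_left inner_add_right
      algebra_simps power2_eq_square)

lemma quad_form_lincomb3:
  assumes "symmetric_mat M"
  shows "quad_form M (a *\<^sub>R x + b *\<^sub>R y + c *\<^sub>R w)
     = a\<^sup>2 * quad_form M x + b\<^sup>2 * quad_form M y + c\<^sup>2 * quad_form M w
       + 2 * a * b * (x \<bullet> (M *v y)) + 2 * a * c * (x \<bullet> (M *v w)) + 2 * b * c * (y \<bullet> (M *v w))"
  using symmetric_mat_inner_commute[OF assms, of y x] symmetric_mat_inner_commute[OF assms, of w x]
    symmetric_mat_inner_commute[OF assms, of w y]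
  by (simp add: matrix_vector_right_distrib matrix_vector_mult_scaleR inner_add_left inner_add_right
      algebra_simps power2_eq_square)

lemma continuous_on_quad_form: "continuous_on X (quad_form M)"
  by (intro continuous_intros linear_continuous_on linear_linear matrix_vector_mul_linear)

lemma nonneg_quadratic_imp_linear_coeff_0:
  fixes b c :: real
  assumes "\<And>t. 0 \<le> 2 * t * b + t\<^sup>2 * c"
  shows "b = 0"
proof (rule ccontr)
  assume "b \<noteq> 0"
  define k where "k = \<bar>c\<bar> + 1"
  define t where "t = - b / k"
  have k: "k > 0" unfolding k_def by simp
  have "2 * t * b + t\<^sup>2 * c \<le> 2 * t * b + t\<^sup>2 * \<bar>c\<bar>"
    by (intro add_left_mono mult_left_mono) auto
  also have "\<dots> = b\<^sup>2 * (\<bar>c\<bar> - 2 * k) / k\<^sup>2"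
    unfolding t_def using k by (simp add: field_simps power2_eq_square)
  also have "\<dots> < 0"
    using \<open>b \<noteq> 0\<close> k unfolding k_def by (intro divide_neg_pos mult_pos_neg) auto
  finally show False using assms[of t] by simp
qed

lemma lincomb_rotation_eq_0:
  fixes a b \<alpha> \<beta> :: real
  assumes "a \<noteq> 0 \<or> b \<noteq> 0" "a * \<alpha> + b * \<beta> = 0" "b * \<alpha> - a * \<beta> = 0"
  shows "\<alpha> = 0" "\<beta> = 0"
proof -
  have ab: "a\<^sup>2 + b\<^sup>2 \<noteq> 0" using assms(1) by simp
  have "(a\<^sup>2 + b\<^sup>2) * \<alpha> = a * (a * \<alpha> + b * \<beta>) + b * (b * \<alpha> - a * \<beta>)"
    by (simp add: algebra_simps power2_eq_square)
  also have "\<dots> = 0" using assms(2,3) by simp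
  finally show "\<alpha> = 0" by (metis ab mult_eq_0_iff)
  have "(a\<^sup>2 + b\<^sup>2) * \<beta> = b * (a * \<alpha> + b * \<beta>) - a * (b * \<alpha> - a * \<beta>)"
    by (simp add: algebra_simps power2_eq_square)
  also have "\<dots> = 0" using assms(2,3) by simp
  finally show "\<beta> = 0" by (metis ab mult_eq_0_iff)
qed

text \<open>On the isotropic vectors of a positive semidefinite form the polarisation
  \<open>t \<mapsto> (x + t y)\<^sup>T P (x + t y)\<close> has no constant term, so its linear term vanishes.\<close>

lemma psd_quad_form_eq_0_imp:
  assumes "symmetric_mat P" "psd P" "quad_form P x = 0"
  shows "P *v x = 0"
proof -
  have "y \<bullet> (P *v x) = 0" for y
  proof (rule nonneg_quadratic_imp_linear_coeff_0)
    fix t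
    have "0 \<le> quad_form P (1 *\<^sub>R x + t *\<^sub>R y)"
      using assms(2) unfolding psd_def by blast
    also have "\<dots> = 2 * t * (y \<bullet> (P *v x)) + t\<^sup>2 * quad_form P y"
      using quad_form_lincomb2[OF assms(1), of 1 x t y] assms(3)
        symmetric_mat_inner_commute[OF assms(1), of x y] by simp
    finally show "0 \<le> 2 * t * (y \<bullet> (P *v x)) + t\<^sup>2 * quad_form P y" .
  qed
  from this[of "P *v x"] show ?thesis by simp
qed

section \<open>Conjugate bases and simultaneous diagonalisation\<close>

lemma subspace_hyperplane_section: "subspace S \<Longrightarrow> subspace {w \<in> S. a \<bullet> w = 0}"
  by (simp add: subspace_def inner_add_right inner_scaleR_right)

lemma subset_span_insert_hyperplane_section:
  fixes S :: "'a::euclidean_space set"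
  assumes "subspace S" "v \<in> S" "a \<bullet> v \<noteq> 0"
  shows "S \<subseteq> span (insert v {w \<in> S. a \<bullet> w = 0})"
proof
  fix x assume x: "x \<in> S"
  define c where "c = (a \<bullet> x) / (a \<bullet> v)"
  have "x - c *\<^sub>R v \<in> {w \<in> S. a \<bullet> w = 0}"
    unfolding c_def using x assms by (auto simp: subspace_diff subspace_scale inner_diff_right)
  then have "x - c *\<^sub>R v \<in> span (insert v {w \<in> S. a \<bullet> w = 0})"
    by (meson span_base span_mono subset_insertI subsetD)
  moreover have "c *\<^sub>R v \<in> span (insert v {w \<in> S. a \<bullet> w = 0})"
    by (simp add: span_base span_mul)
  ultimately have "(x - c *\<^sub>R v) + c *\<^sub>R v \<in> span (insert v {w \<in> S. a \<bullet> w = 0})"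
    by (rule span_add)
  then show "x \<in> span (insert v {w \<in> S. a \<bullet> w = 0})" by simp
qed

lemma dim_hyperplane_section:
  fixes S :: "'a::euclidean_space set"
  assumes "subspace S" "v \<in> S" "a \<bullet> v \<noteq> 0"
  shows "dim S = Suc (dim {w \<in> S. a \<bullet> w = 0})"
proof -
  let ?S' = "{w \<in> S. a \<bullet> w = 0}"
  have "span ?S' = ?S'"
    by (rule span_eq_iff[THEN iffD2, OF subspace_hyperplane_section[OF assms(1)]])
  moreover have "v \<notin> ?S'" using assms(3) by simp
  ultimately have "v \<notin> span ?S'" by (simp only: not_False_eq_True)
  have "span (insert v ?S') = S"
    using assms subset_span_insert_hyperplane_section[OF assms]
    by (intro subset_antisym span_minimal) auto
  then have "dim S = dim (insert v ?S')" by (metis dim_span)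
  also have "\<dots> = Suc (dim ?S')" using \<open>v \<notin> span ?S'\<close> by (simp add: dim_insert)
  finally show ?thesis .
qed

lemma dim_le_Suc_hyperplane_section:
  fixes S :: "'a::euclidean_space set"
  assumes "subspace S"
  shows "dim S \<le> Suc (dim {w \<in> S. a \<bullet> w = 0})"
proof (cases "\<exists>v\<in>S. a \<bullet> v \<noteq> 0")
  case True
  then obtain v where "v \<in> S" "a \<bullet> v \<noteq> 0" by blast
  then show ?thesis by (simp add: dim_hyperplane_section[OF assms])
next
  case False
  then have "{w \<in> S. a \<bullet> w = 0} = S" by auto
  then show ?thesis by simp
qed

text \<open>A maximiser \<open>v\<close> of the Rayleigh quotient \<open>x\<^sup>T M x / x\<^sup>T P x\<close> on the unit sphere of \<open>S\<close>
  satisfies \<open>w\<^sup>T (M - \<mu> P) v = 0\<close> for all \<open>w \<in> S\<close>, since \<open>M - \<mu> P\<close> is negative semidefinite on \<open>S\<close>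
  and \<open>v\<close> is isotropic for it.\<close>

lemma pencil_eigenvector_in_subspace:
  fixes P M :: "real^'n^'n"
  assumes symP: "symmetric_mat P" and symM: "symmetric_mat M" and S: "subspace S"
    and x0: "x0 \<in> S" "x0 \<noteq> 0"
    and pos: "\<And>x. x \<in> S \<Longrightarrow> x \<noteq> 0 \<Longrightarrow> quad_form P x > 0"
  obtains v \<mu> where "v \<in> S" "v \<noteq> 0" "\<And>w. w \<in> S \<Longrightarrow> w \<bullet> (M *v v) = \<mu> * (w \<bullet> (P *v v))"
proof -
  define \<Sigma> where "\<Sigma> = S \<inter> sphere 0 1"
  define g where "g x = quad_form M x / quad_form P x" for x
  have "compact \<Sigma>"
    unfolding \<Sigma>_def using S by (simp add: closed_subspace closed_Int_compact Int_commute)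
  moreover have "x0 /\<^sub>R norm x0 \<in> \<Sigma>"
    unfolding \<Sigma>_def using x0 S by (simp add: subspace_scale)
  moreover have "continuous_on \<Sigma> g"
    unfolding g_def using pos
    by (intro continuous_on_divide continuous_on_quad_form) (force simp: \<Sigma>_def)
  ultimately obtain v where v: "v \<in> \<Sigma>" and vmax: "\<And>y. y \<in> \<Sigma> \<Longrightarrow> g y \<le> g v"
    using continuous_attains_sup[of \<Sigma> g] by blast
  define \<mu> where "\<mu> = g v"
  have vS: "v \<in> S" and v0: "v \<noteq> 0" using v unfolding \<Sigma>_def by auto
  have vM: "quad_form M v = \<mu> * quad_form P v"
    unfolding \<mu>_def g_def using pos[OF vS v0] by simp
  have bound: "quad_form M x \<le> \<mu> * quad_form P x" if "x \<in> S" for x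
  proof (cases "x = 0")
    case False
    define r where "r = 1 / norm x"
    have "r *\<^sub>R x \<in> \<Sigma>" unfolding \<Sigma>_def r_def using that False S by (simp add: subspace_scale)
    then have "g (r *\<^sub>R x) \<le> \<mu>" using vmax \<mu>_def by auto
    moreover have "g (r *\<^sub>R x) = g x"
      unfolding g_def quad_form_scaleR using False by (simp add: r_def)
    ultimately show ?thesis using pos[OF that False] by (simp add: g_def divide_le_eq)
  qed simp
  have "w \<bullet> (M *v v) = \<mu> * (w \<bullet> (P *v v))" if w: "w \<in> S" for w
  proof -
    have "\<mu> * (w \<bullet> (P *v v)) - w \<bullet> (M *v v) = 0"
    proof (rule nonneg_quadratic_imp_linear_coeff_0)
      fix t
      have "1 *\<^sub>R v + t *\<^sub>R w \<in> S" using S vS w by (simp add: subspace_add subspace_scale)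
      from bound[OF this]
      have "0 \<le> \<mu> * quad_form P (1 *\<^sub>R v + t *\<^sub>R w) - quad_form M (1 *\<^sub>R v + t *\<^sub>R w)"
        by simp
      also have "\<dots> = 2 * t * (\<mu> * (w \<bullet> (P *v v)) - w \<bullet> (M *v v))
            + t\<^sup>2 * (\<mu> * quad_form P w - quad_form M w)"
        unfolding quad_form_lincomb2[OF symP] quad_form_lincomb2[OF symM]
        using vM symmetric_mat_inner_commute[OF symP, of v w]
          symmetric_mat_inner_commute[OF symM, of v w]
        by (simp add: algebra_simps)
      finally show "0 \<le> 2 * t * (\<mu> * (w \<bullet> (P *v v)) - w \<bullet> (M *v v))
            + t\<^sup>2 * (\<mu> * quad_form P w - quad_form M w)" .
    qed
    then show ?thesis by simp
  qed
  with vS v0 show ?thesis by (rule that)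
qed

lemma conjugate_basis_of_subspace:
  fixes P M :: "real^'n^'n"
  assumes symP: "symmetric_mat P" and symM: "symmetric_mat M" and "subspace S"
    and "\<And>x. x \<in> S \<Longrightarrow> x \<noteq> 0 \<Longrightarrow> quad_form P x > 0"
  obtains T where "T \<subseteq> S" "independent T" "S \<subseteq> span T" "conjugate_set P T" "conjugate_set M T"
  using assms(3,4)
proof (induction "dim S" arbitrary: S thesis)
  case 0
  then have "S \<subseteq> {0}" by (metis dim_eq_0)
  then show ?case by (intro "0.prems"(1)[of "{}"]) (auto simp: conjugate_set_def independent_empty)
next
  case (Suc k)
  note S = Suc.prems(2) and pos = Suc.prems(3)
  have "\<not> S \<subseteq> {0}" using Suc.hyps(2) by (metis dim_eq_0 nat.distinct(1))
  then obtain x0 where "x0 \<in> S" "x0 \<noteq> 0" by blast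
  then obtain v \<mu> where vS: "v \<in> S" and v0: "v \<noteq> 0"
    and eig: "\<And>w. w \<in> S \<Longrightarrow> w \<bullet> (M *v v) = \<mu> * (w \<bullet> (P *v v))"
    using pencil_eigenvector_in_subspace[OF symP symM S _ _ pos] by blast
  define S' where "S' = {w \<in> S. (P *v v) \<bullet> w = 0}"
  have Pvv: "(P *v v) \<bullet> v \<noteq> 0" using pos[OF vS v0] by (simp add: inner_commute)
  have "dim S = Suc (dim S')"
    unfolding S'_def by (rule dim_hyperplane_section[OF S vS Pvv])
  moreover have "subspace S'" unfolding S'_def by (rule subspace_hyperplane_section[OF S])
  ultimately obtain T' where T': "T' \<subseteq> S'" "independent T'" "S' \<subseteq> span T'"
      "conjugate_set P T'" "conjugate_set M T'"
    using Suc.hyps(1)[of S'] Suc.hyps(2) pos unfolding S'_def by auto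
  have "v \<notin> span T'"
    using span_minimal[OF T'(1) \<open>subspace S'\<close>] Pvv unfolding S'_def by auto
  have orth: "u \<bullet> (P *v v) = 0 \<and> v \<bullet> (P *v u) = 0 \<and> u \<bullet> (M *v v) = 0 \<and> v \<bullet> (M *v u) = 0"
    if "u \<in> T'" for u
  proof -
    have "u \<in> S" "u \<bullet> (P *v v) = 0"
      using that T'(1) unfolding S'_def by (auto simp: inner_commute)
    then show ?thesis
      using eig symmetric_mat_inner_commute[OF symP, of u v]
        symmetric_mat_inner_commute[OF symM, of u v] by simp
  qed
  show ?case
  proof (rule Suc.prems(1)[of "insert v T'"])
    show "insert v T' \<subseteq> S" using vS T'(1) S'_def by auto
    show "independent (insert v T')" using T'(2) \<open>v \<notin> span T'\<close> by (simp add: independent_insert)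
    have "S \<subseteq> span (insert v S')"
      unfolding S'_def by (rule subset_span_insert_hyperplane_section[OF S vS Pvv])
    also have "\<dots> \<subseteq> span (insert v T')"
      using T'(3) by (intro span_minimal) (auto intro: span_base span_superset subsetD[OF span_mono[of T' "insert v T'"]])
    finally show "S \<subseteq> span (insert v T')" .
    show "conjugate_set P (insert v T')" "conjugate_set M (insert v T')"
      using T'(4,5) orth by (auto simp: conjugate_set_def pairwise_insert)
  qed
qed

lemma matrix_congruence_entry:
  fixes C A :: "real^'n^'n"
  shows "(transpose C ** A ** C) $ i $ j = column i C \<bullet> (A *v column j C)"
proof -
  have "(transpose C ** A ** C) $ i $ j = (\<Sum>k\<in>UNIV. (\<Sum>l\<in>UNIV. C$l$i * A$l$k) * C$k$j)"
    by (simp add: matrix_matrix_mult_def transpose_def)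
  also have "\<dots> = (\<Sum>l\<in>UNIV. \<Sum>k\<in>UNIV. C$l$i * (A$l$k * C$k$j))"
    by (subst sum.swap) (simp add: sum_distrib_right sum_distrib_left mult.assoc)
  also have "\<dots> = column i C \<bullet> (A *v column j C)"
    by (simp add: matrix_vector_mult_def inner_vec_def sum_distrib_left column_def)
  finally show ?thesis .
qed

lemma simul_diag_congruence_if_conjugate_basis:
  fixes A B :: "real^'n^'n"
  assumes ind: "independent U" and card: "card U = CARD('n)"
    and "conjugate_set A U" "conjugate_set B U"
  shows "simul_diag_congruence A B"
proof -
  have finU: "finite U" using ind by (rule independent_imp_finite)
  obtain c where c: "bij_betw c (UNIV::'n set) U"
    using finite_same_card_bij[OF finite[of "UNIV::'n set"] finU] card by auto
  define C :: "real^'n^'n" where "C = transpose (\<chi> j. c j)"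
  have col: "column i C = c i" for i
    unfolding C_def by (simp add: column_transpose row_def vec_lambda_eta)
  have injc: "inj c" and cU: "c i \<in> U" for i using c by (auto simp: bij_betw_def)
  have "invertible C"
    unfolding invertible_left_inverse matrix_left_invertible_independent_columns col
  proof (intro allI impI)
    fix k :: "'n \<Rightarrow> real" and i
    assume "(\<Sum>i\<in>UNIV. k i *s c i) = 0"
    then have "(\<Sum>v\<in>U. k (inv c v) *\<^sub>R v) = 0"
      using sum.reindex_bij_betw[OF c, of "\<lambda>v. k (inv c v) *\<^sub>R v"] injc
      by (simp add: scalar_mult_eq_scaleR)
    then have "\<forall>v\<in>U. k (inv c v) = 0" using ind finU by (auto simp: dependent_finite)
    then show "k i = 0" using cU[of i] injc by auto
  qed
  moreover have "diagonal_mat (transpose C ** M ** C)" if "conjugate_set M U" for M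
    using that cU injc
    unfolding diagonal_mat_def matrix_congruence_entry col conjugate_set_def pairwise_def
    by (auto simp: inj_eq)
  ultimately show ?thesis unfolding simul_diag_congruence_def using assms(3,4) by blast
qed

lemma simul_diag_congruence_commute:
  "simul_diag_congruence A B \<Longrightarrow> simul_diag_congruence B A"
  unfolding simul_diag_congruence_def by blast

lemma dim_orthogonal_comp_add:
  fixes W :: "(real^'n) set"
  assumes "subspace W"
  shows "dim (orthogonal_comp W) + dim W = CARD('n)"
  using dim_subspace_orthogonal_to_vectors[OF assms subspace_UNIV]
  unfolding orthogonal_comp_def by simp

lemma subspace_common_kernel: "subspace (Nset A \<inter> Nset B)"
  unfolding Nset_def subspace_def by (auto simp: matrix_vector_right_distrib matrix_vector_mult_scaleR)

lemma conjugate_set_Un_kernel: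
  assumes symM: "symmetric_mat M" and "conjugate_set M T" and ker: "\<And>w. w \<in> K \<Longrightarrow> M *v w = 0"
  shows "conjugate_set M (K \<union> T)"
  unfolding conjugate_set_def pairwise_def
proof (intro ballI impI)
  fix u v assume u: "u \<in> K \<union> T" and v: "v \<in> K \<union> T" and "u \<noteq> v"
  consider "v \<in> K" | "u \<in> K" | "u \<in> T" "v \<in> T" using u v by blast
  then show "u \<bullet> (M *v v) = 0"
  proof cases
    case 1
    then show ?thesis using ker by simp
  next
    case 2
    then show ?thesis using ker symmetric_mat_inner_commute[OF symM, of u v] by simp
  next
    case 3
    then show ?thesis using assms(2) \<open>u \<noteq> v\<close> by (simp add: conjugate_set_def pairwise_def)
  qed
qed

text \<open>The common kernel \<open>W\<close> is conjugate to everything, so a conjugate basis of \<open>W\<^sup>\<bottom>\<close>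
  extends by an arbitrary basis of \<open>W\<close>.\<close>

lemma simul_diag_congruence_if_conjugate_basis_of_kernel_complement:
  fixes A B :: "real^'n^'n"
  assumes symA: "symmetric_mat A" and symB: "symmetric_mat B"
    and T: "T \<subseteq> orthogonal_comp (Nset A \<inter> Nset B)" "independent T"
      "orthogonal_comp (Nset A \<inter> Nset B) \<subseteq> span T" "conjugate_set A T" "conjugate_set B T"
  shows "simul_diag_congruence A B"
proof -
  define W where "W = Nset A \<inter> Nset B"
  have subW: "subspace W" unfolding W_def by (rule subspace_common_kernel)
  obtain TW where TW: "TW \<subseteq> W" "independent TW" "W \<subseteq> span TW" "card TW = dim W"
    using basis_exists[of W] by blast
  have finite: "finite T" "finite TW" using T(2) TW(2) by (simp_all add: independent_imp_finite)
  have "card T = dim (orthogonal_comp W)"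
    using dim_unique[OF T(1) T(3) T(2) refl] unfolding W_def by simp
  moreover have "dim (orthogonal_comp W) + dim W = CARD('n)"
    by (rule dim_orthogonal_comp_add[OF subW])
  moreover have "TW \<inter> T = {}"
  proof -
    have "TW \<inter> T \<subseteq> W \<inter> orthogonal_comp W" using TW(1) T(1) unfolding W_def by blast
    also have "\<dots> = {0}" by (rule orthogonal_Int_0[OF subW])
    finally show ?thesis using T(2) dependent_zero by blast
  qed
  ultimately have card: "card (TW \<union> T) = CARD('n)"
    using TW(4) finite by (simp add: card_Un_disjoint)
  have "UNIV \<subseteq> span (TW \<union> T)"
  proof
    fix x :: "real^'n"
    obtain w s where ws: "w \<in> W" "s \<in> orthogonal_comp W" "x = w + s"
      using subspace_sum_orthogonal_comp[OF subW] by (metis UNIV_I set_plus_elim)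
    have "w \<in> span (TW \<union> T)" using ws(1) TW(3) span_mono[of TW "TW \<union> T"] by blast
    moreover have "s \<in> span (TW \<union> T)"
      using ws(2) T(3) span_mono[of T "TW \<union> T"] unfolding W_def by blast
    ultimately show "x \<in> span (TW \<union> T)" using ws(3) by (simp add: span_add)
  qed
  then have ind: "independent (TW \<union> T)"
    using card_eq_dim[of "TW \<union> T" UNIV] card finite by simp
  have "conjugate_set A (TW \<union> T)" "conjugate_set B (TW \<union> T)"
    using TW(1) unfolding W_def Nset_def
    by (auto intro!: conjugate_set_Un_kernel[OF symA T(4)] conjugate_set_Un_kernel[OF symB T(5)])
  with ind card show ?thesis by (rule simul_diag_congruence_if_conjugate_basis)
qed

text \<open>A basis conjugate for \<open>P = a A + b B\<close> and for the rotated member \<open>b A - a B\<close> is conjugate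
  for \<open>A\<close> and \<open>B\<close>.\<close>

lemma simul_diag_congruence_if_semidefinite_pencil:
  fixes A B :: "real^'n^'n"
  assumes symA: "symmetric_mat A" and symB: "symmetric_mat B"
    and ab: "a \<noteq> 0 \<or> b \<noteq> 0"
    and psdP: "psd (a *\<^sub>R A + b *\<^sub>R B)"
    and iso: "\<And>x. quad_form (a *\<^sub>R A + b *\<^sub>R B) x = 0 \<Longrightarrow> x \<in> Nset A \<inter> Nset B"
  shows "simul_diag_congruence A B"
proof -
  define S where "S = orthogonal_comp (Nset A \<inter> Nset B)"
  define P where "P = a *\<^sub>R A + b *\<^sub>R B"
  define M where "M = b *\<^sub>R A + (- a) *\<^sub>R B"
  have symP: "symmetric_mat P" and symM: "symmetric_mat M"
    unfolding P_def M_def by (rule symmetric_mat_lincomb[OF symA symB])+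
  have pos: "quad_form P x > 0" if "x \<in> S" "x \<noteq> 0" for x
  proof -
    have "x \<bullet> x \<noteq> 0" using that(2) by simp
    then have "x \<notin> Nset A \<inter> Nset B"
      using that(1) unfolding S_def orthogonal_comp_def orthogonal_def by blast
    then have "quad_form P x \<noteq> 0" using iso unfolding P_def by blast
    moreover have "quad_form P x \<ge> 0" using psdP unfolding psd_def P_def by blast
    ultimately show ?thesis by simp
  qed
  obtain T where T: "T \<subseteq> S" "independent T" "S \<subseteq> span T" "conjugate_set P T" "conjugate_set M T"
    using conjugate_basis_of_subspace[OF symP symM _ pos] subspace_orthogonal_comp
    unfolding S_def by blast
  have "u \<bullet> (A *v v) = 0 \<and> u \<bullet> (B *v v) = 0" if "u \<in> T" "v \<in> T" "u \<noteq> v" for u v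
  proof -
    have "a * (u \<bullet> (A *v v)) + b * (u \<bullet> (B *v v)) = 0"
         "b * (u \<bullet> (A *v v)) - a * (u \<bullet> (B *v v)) = 0"
      using T(4,5) that
      unfolding conjugate_set_def pairwise_def P_def M_def inner_matrix_vector_lincomb by simp_all
    then show ?thesis using lincomb_rotation_eq_0[OF ab] by blast
  qed
  then have "conjugate_set A T" "conjugate_set B T"
    unfolding conjugate_set_def pairwise_def by blast+
  with T(1-3) show ?thesis unfolding S_def
    by (rule simul_diag_congruence_if_conjugate_basis_of_kernel_complement[OF symA symB])
qed

text \<open>For \<open>s \<noteq> t\<close> the sum of the semidefinite forms \<open>A + s B\<close> and \<open>A + t B\<close> can only vanish where
  both vanish, i.e.\ on the common kernel of \<open>A + s B\<close> and \<open>A + t B\<close>, which is that of \<open>A\<close> and \<open>B\<close>.\<close>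

lemma simul_diag_congruence_if_I_psd_two_points:
  fixes A B :: "real^'n^'n"
  assumes symA: "symmetric_mat A" and symB: "symmetric_mat B"
    and "s \<in> I_psd A B" "t \<in> I_psd A B" "s \<noteq> t"
  shows "simul_diag_congruence A B"
proof (rule simul_diag_congruence_if_semidefinite_pencil[OF symA symB, of 2 "s + t"])
  have psd: "psd (1 *\<^sub>R A + s *\<^sub>R B)" "psd (1 *\<^sub>R A + t *\<^sub>R B)"
    using assms(3,4) by (simp_all add: I_psd_def)
  have sym: "symmetric_mat (1 *\<^sub>R A + r *\<^sub>R B)" for r
    by (rule symmetric_mat_lincomb[OF symA symB])
  have sum: "quad_form (2 *\<^sub>R A + (s + t) *\<^sub>R B) x
      = quad_form (1 *\<^sub>R A + s *\<^sub>R B) x + quad_form (1 *\<^sub>R A + t *\<^sub>R B) x" for x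
    unfolding inner_matrix_vector_lincomb by (simp add: algebra_simps)
  show "psd (2 *\<^sub>R A + (s + t) *\<^sub>R B)"
    using psd unfolding psd_def sum by (simp add: add_nonneg_nonneg)
  fix x assume "quad_form (2 *\<^sub>R A + (s + t) *\<^sub>R B) x = 0"
  moreover have "quad_form (1 *\<^sub>R A + s *\<^sub>R B) x \<ge> 0" "quad_form (1 *\<^sub>R A + t *\<^sub>R B) x \<ge> 0"
    using psd unfolding psd_def by auto
  ultimately have "quad_form (1 *\<^sub>R A + s *\<^sub>R B) x = 0" "quad_form (1 *\<^sub>R A + t *\<^sub>R B) x = 0"
    unfolding sum by linarith+
  then have "(1 *\<^sub>R A + s *\<^sub>R B) *v x = 0" "(1 *\<^sub>R A + t *\<^sub>R B) *v x = 0"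
    using psd_quad_form_eq_0_imp[OF sym psd(1)] psd_quad_form_eq_0_imp[OF sym psd(2)] by blast+
  then have "A *v x + s *\<^sub>R (B *v x) = 0" "A *v x + t *\<^sub>R (B *v x) = 0"
    unfolding matrix_vector_mult_lincomb by simp_all
  moreover from this have "(s - t) *\<^sub>R (B *v x) = 0"
    by (auto simp: scaleR_left_diff_distrib eq_neg_iff_add_eq_0[symmetric])
  ultimately show "x \<in> Nset A \<inter> Nset B" using \<open>s \<noteq> t\<close> by (simp add: Nset_def)
qed simp

section \<open>Dines' theorem on the joint numerical range\<close>

text \<open>Write \<open>c = \<alpha> a + \<beta> b\<close>; it suffices to solve \<open>s\<^sup>2 + 2 \<alpha> s t = 1 = t\<^sup>2 + 2 \<beta> s t\<close>.
  With \<open>(s, t) = (1 - \<tau>, \<sigma> \<tau>) / r\<close>, where the sign \<open>\<sigma>\<close> makes \<open>\<sigma> (\<alpha> + \<beta>) \<ge> 0\<close>, the two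
  left-hand sides are \<open>p \<tau> / r\<^sup>2\<close> and \<open>q \<tau> / r\<^sup>2\<close>; \<open>p\<close> and \<open>q\<close> meet on \<open>[0, 1]\<close> by the intermediate
  value theorem, at a point where \<open>p + q > 0\<close>.\<close>

lemma dines_system_solvable_nondegenerate:
  fixes a1 a2 b1 b2 c1 c2 :: real
  assumes "a1 * b2 - a2 * b1 \<noteq> 0"
  shows "\<exists>s t. s\<^sup>2 * a1 + 2 * s * t * c1 + t\<^sup>2 * b1 = a1 + b1
            \<and> s\<^sup>2 * a2 + 2 * s * t * c2 + t\<^sup>2 * b2 = a2 + b2"
proof -
  define D where "D = a1 * b2 - a2 * b1"
  define \<alpha> where "\<alpha> = (c1 * b2 - c2 * b1) / D"
  define \<beta> where "\<beta> = (a1 * c2 - a2 * c1) / D"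
  have "D \<noteq> 0" using assms unfolding D_def .
  have "\<alpha> * a1 + \<beta> * b1 = ((c1 * b2 - c2 * b1) * a1 + (a1 * c2 - a2 * c1) * b1) / D"
    unfolding \<alpha>_def \<beta>_def by (simp add: add_divide_distrib)
  also have "(c1 * b2 - c2 * b1) * a1 + (a1 * c2 - a2 * c1) * b1 = c1 * D"
    unfolding D_def by (simp add: algebra_simps)
  finally have c1: "c1 = \<alpha> * a1 + \<beta> * b1" using \<open>D \<noteq> 0\<close> by simp
  have "\<alpha> * a2 + \<beta> * b2 = ((c1 * b2 - c2 * b1) * a2 + (a1 * c2 - a2 * c1) * b2) / D"
    unfolding \<alpha>_def \<beta>_def by (simp add: add_divide_distrib)
  also have "(c1 * b2 - c2 * b1) * a2 + (a1 * c2 - a2 * c1) * b2 = c2 * D"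
    unfolding D_def by (simp add: algebra_simps)
  finally have c2: "c2 = \<alpha> * a2 + \<beta> * b2" using \<open>D \<noteq> 0\<close> by simp
  define \<sigma> :: real where "\<sigma> = (if \<alpha> + \<beta> \<ge> 0 then 1 else -1)"
  have \<sigma>: "\<sigma> * (\<alpha> + \<beta>) \<ge> 0" "\<sigma>\<^sup>2 = 1" unfolding \<sigma>_def by auto
  define p where "p \<tau> = (1 - \<tau>)\<^sup>2 + 2 * \<alpha> * \<sigma> * \<tau> * (1 - \<tau>)" for \<tau> :: real
  define q where "q \<tau> = \<tau>\<^sup>2 + 2 * \<beta> * \<sigma> * \<tau> * (1 - \<tau>)" for \<tau> :: real
  have "continuous_on {0..1} (\<lambda>\<tau>. q \<tau> - p \<tau>)" unfolding p_def q_def by (intro continuous_intros)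
  moreover have "q 0 - p 0 \<le> 0" "0 \<le> q 1 - p 1" unfolding p_def q_def by simp_all
  ultimately obtain \<tau> where \<tau>: "0 \<le> \<tau>" "\<tau> \<le> 1" "q \<tau> = p \<tau>"
    using IVT'[of "\<lambda>\<tau>. q \<tau> - p \<tau>" 0 0 1] by auto
  have "\<sigma> * (\<alpha> + \<beta>) * (\<tau> * (1 - \<tau>)) \<ge> 0" using \<tau> \<sigma>(1) by simp
  moreover have "(1 - \<tau>)\<^sup>2 + \<tau>\<^sup>2 > 0" by (cases "\<tau> = 0") (simp_all add: add_nonneg_pos)
  ultimately have "p \<tau> + q \<tau> > 0" unfolding p_def q_def by (simp add: algebra_simps)
  then have p: "p \<tau> > 0" using \<tau>(3) by simp
  define r where "r = sqrt (p \<tau>)"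
  have r: "r\<^sup>2 = p \<tau>" "r > 0" unfolding r_def using p by simp_all
  define s where "s = (1 - \<tau>) / r"
  define t where "t = \<sigma> * \<tau> / r"
  have "s\<^sup>2 * a + 2 * s * t * (\<alpha> * a + \<beta> * b) + t\<^sup>2 * b = a + b" for a b
  proof -
    have "s\<^sup>2 * a + 2 * s * t * (\<alpha> * a + \<beta> * b) + t\<^sup>2 * b
        = ((1 - \<tau>)\<^sup>2 * a + 2 * (1 - \<tau>) * (\<sigma> * \<tau>) * (\<alpha> * a + \<beta> * b) + \<sigma>\<^sup>2 * \<tau>\<^sup>2 * b) / r\<^sup>2"
      unfolding s_def t_def using r p by (simp add: field_simps power2_eq_square)
    also have "\<dots> = (p \<tau> * a + q \<tau> * b) / r\<^sup>2"
      unfolding p_def q_def \<sigma>(2) by (simp add: algebra_simps)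
    also have "\<dots> = a + b" using \<tau>(3) r p by (simp add: field_simps)
    finally show ?thesis .
  qed
  with c1 c2 show ?thesis by blast
qed

lemma dines_system_solvable:
  fixes a1 a2 b1 b2 c1 c2 :: real
  shows "\<exists>s t. s\<^sup>2 * a1 + 2 * s * t * c1 + t\<^sup>2 * b1 = a1 + b1
            \<and> s\<^sup>2 * a2 + 2 * s * t * c2 + t\<^sup>2 * b2 = a2 + b2"
proof (cases "a1 * b2 - a2 * b1 = 0")
  case False
  then show ?thesis by (rule dines_system_solvable_nondegenerate)
next
  case True
  show ?thesis
  proof (cases "a1 = 0 \<and> a2 = 0")
    case True
    then show ?thesis by (intro exI[of _ 0] exI[of _ 1]) simp
  next
    case False
    define n where "n = a1\<^sup>2 + a2\<^sup>2"
    define k where "k = (a1 * b1 + a2 * b2) / n"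
    have "n > 0" unfolding n_def using False by (auto simp: add_pos_nonneg add_nonneg_pos)
    moreover have "b1 * n = (a1 * b1 + a2 * b2) * a1" "b2 * n = (a1 * b1 + a2 * b2) * a2"
      using \<open>a1 * b2 - a2 * b1 = 0\<close> unfolding n_def
      by (simp_all add: algebra_simps power2_eq_square)
    ultimately have b: "b1 = k * a1" "b2 = k * a2" unfolding k_def by (simp_all add: field_simps)
    show ?thesis
    proof (cases "1 + k \<ge> 0")
      case True
      then show ?thesis
        by (intro exI[of _ "sqrt (1 + k)"] exI[of _ 0]) (simp add: b algebra_simps)
    next
      case False
      then have "1 + 1 / k \<ge> 0" "a1 = b1 / k" "a2 = b2 / k" using b by (simp_all add: field_simps)
      then show ?thesis
        by (intro exI[of _ 0] exI[of _ "sqrt (1 + 1 / k)"]) (simp add: algebra_simps)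
    qed
  qed
qed

text \<open>The map \<open>x \<mapsto> (x\<^sup>T A x, x\<^sup>T B x)\<close>, with \<open>\<real>\<^sup>2\<close> represented by \<open>\<complex>\<close>; its image is the joint
  numerical range.\<close>

definition joint_form :: "real^'n^'n \<Rightarrow> real^'n^'n \<Rightarrow> real^'n \<Rightarrow> complex" where
  "joint_form A B x = Complex (quad_form A x) (quad_form B x)"

lemma joint_form_eq_0_iff: "joint_form A B x = 0 \<longleftrightarrow> x \<in> Qset A \<inter> Qset B"
  by (simp add: joint_form_def Qset_def complex_eq_iff)

lemma joint_form_scaleR: "joint_form A B (r *\<^sub>R x) = r\<^sup>2 *\<^sub>R joint_form A B x"
  unfolding joint_form_def quad_form_scaleR by (simp add: complex_eq_iff)

lemma joint_form_scaleR_sqrt: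
  "c \<ge> 0 \<Longrightarrow> joint_form A B (sqrt c *\<^sub>R x) = c *\<^sub>R joint_form A B x"
  by (simp add: joint_form_scaleR)

lemma continuous_on_joint_form: "continuous_on X (joint_form A B)"
  unfolding joint_form_def Complex_eq by (intro continuous_intros continuous_on_quad_form)

lemma joint_form_add_in_image:
  assumes symA: "symmetric_mat A" and symB: "symmetric_mat B" and S: "subspace S"
    and "x \<in> S" "y \<in> S"
  shows "\<exists>z\<in>S. joint_form A B z = joint_form A B x + joint_form A B y"
proof -
  obtain s t where
    "s\<^sup>2 * quad_form A x + 2 * s * t * (x \<bullet> (A *v y)) + t\<^sup>2 * quad_form A y = quad_form A x + quad_form A y"
    "s\<^sup>2 * quad_form B x + 2 * s * t * (x \<bullet> (B *v y)) + t\<^sup>2 * quad_form B y = quad_form B x + quad_form B y"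
    using dines_system_solvable by blast
  then have "joint_form A B (s *\<^sub>R x + t *\<^sub>R y) = joint_form A B x + joint_form A B y"
    by (simp add: joint_form_def complex_eq_iff quad_form_lincomb2[OF symA] quad_form_lincomb2[OF symB])
  moreover have "s *\<^sub>R x + t *\<^sub>R y \<in> S" using S assms(4,5) by (simp add: subspace_add subspace_scale)
  ultimately show ?thesis by blast
qed

lemma joint_form_nonneg_combination_in_image:
  assumes symA: "symmetric_mat A" and symB: "symmetric_mat B" and S: "subspace S"
    and "finite F" "F \<subseteq> joint_form A B ` S" "\<And>v. v \<in> F \<Longrightarrow> 0 \<le> u v"
  shows "\<exists>z\<in>S. joint_form A B z = (\<Sum>v\<in>F. u v *\<^sub>R v)"
  using assms(4-6)
proof (induction F rule: finite_induct)
  case empty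
  then show ?case using subspace_0[OF S] by (intro bexI[of _ 0]) (auto simp: joint_form_def complex_eq_iff)
next
  case (insert v F)
  then obtain z where z: "z \<in> S" "joint_form A B z = (\<Sum>v\<in>F. u v *\<^sub>R v)" by auto
  obtain x where x: "x \<in> S" "v = joint_form A B x" using insert.prems(1) by auto
  have "sqrt (u v) *\<^sub>R x \<in> S" using S x(1) by (simp add: subspace_scale)
  then obtain z' where "z' \<in> S" "joint_form A B z' = u v *\<^sub>R v + joint_form A B z"
    using joint_form_add_in_image[OF symA symB S _ z(1)] joint_form_scaleR_sqrt[OF insert.prems(2)]
      x(2) by fastforce
  then show ?case using z insert.hyps by (intro bexI[of _ z']) auto
qed

section \<open>Pointedness of the joint numerical range\<close>

lemma quadratic_has_positive_root:
  fixes X Y b :: real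
  assumes "X > 0" "Y < 0"
  shows "\<exists>t>0. X + 2 * t * b + t\<^sup>2 * Y = 0"
proof -
  define q where "q = sqrt (b\<^sup>2 - X * Y)"
  have XY: "X * Y < 0" using assms by (simp add: mult_pos_neg)
  then have "b\<^sup>2 - X * Y \<ge> 0" using zero_le_power2[of b] by linarith
  then have q2: "q\<^sup>2 = b\<^sup>2 - X * Y" unfolding q_def by simp
  have "\<bar>b\<bar> < q" unfolding q_def using XY by (simp add: real_less_rsqrt)
  then have "b + q > 0" by linarith
  define t where "t = (b + q) / (- Y)"
  have "t > 0" unfolding t_def using \<open>b + q > 0\<close> assms by (simp add: divide_pos_neg)
  moreover have "(X + 2 * t * b + t\<^sup>2 * Y) * Y = X * Y - 2 * b * (b + q) + (b + q)\<^sup>2"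
    unfolding t_def using assms by (simp add: field_simps power2_eq_square)
  then have "(X + 2 * t * b + t\<^sup>2 * Y) * Y = 0"
    using q2 by (simp add: algebra_simps power2_eq_square)
  then have "X + 2 * t * b + t\<^sup>2 * Y = 0" using assms by simp
  ultimately show ?thesis by blast
qed

lemma quartic_has_positive_root:
  fixes X a3 a2 a1 c :: real
  assumes X: "X > 0" and c: "c < 0"
  shows "\<exists>s>0. X * s ^ 4 + a3 * s ^ 3 + a2 * s ^ 2 + a1 * s + c = 0"
proof -
  define f where "f s = X * s ^ 4 + a3 * s ^ 3 + a2 * s ^ 2 + a1 * s + c" for s :: real
  define L where "L = \<bar>a3\<bar> + \<bar>a2\<bar> + \<bar>a1\<bar> + \<bar>c\<bar>"
  define R where "R = L / X + 1"
  have L: "L \<ge> 0" unfolding L_def by simp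
  have R: "R \<ge> 1" unfolding R_def using L X by simp
  have bound: "- (\<bar>a\<bar> * R ^ 3) \<le> a * R ^ k" if "k \<le> 3" for a :: real and k
  proof -
    have "R ^ k \<le> R ^ 3" using R that by (rule power_increasing[rotated])
    then have "\<bar>a\<bar> * R ^ k \<le> \<bar>a\<bar> * R ^ 3" by (rule mult_left_mono) simp
    moreover have "- (\<bar>a\<bar> * R ^ k) \<le> a * R ^ k"
      using mult_right_mono[of "- \<bar>a\<bar>" a "R ^ k"] R by simp
    ultimately show ?thesis by linarith
  qed
  have "a3 * R ^ 3 \<ge> - (\<bar>a3\<bar> * R ^ 3)" "a2 * R ^ 2 \<ge> - (\<bar>a2\<bar> * R ^ 3)"
       "a1 * R ^ 1 \<ge> - (\<bar>a1\<bar> * R ^ 3)" "c * R ^ 0 \<ge> - (\<bar>c\<bar> * R ^ 3)"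
    by (simp_all only: bound numeral_le_iff semiring_norm le_numeral_extra)
  then have fR: "X * R ^ 4 - L * R ^ 3 \<le> f R"
    unfolding f_def L_def by (simp add: algebra_simps)
  have "0 < R ^ 3 * X" using R X by simp
  also have "R ^ 3 * X = X * R ^ 4 - L * R ^ 3"
  proof -
    have "X * R - L = X" unfolding R_def using X by (simp add: field_simps)
    then have "R ^ 3 * X = R ^ 3 * (X * R - L)" by simp
    also have "\<dots> = X * R ^ 4 - L * R ^ 3" by (simp add: algebra_simps power_numeral_reduce)
    finally show ?thesis .
  qed
  also note fR
  finally have "f R > 0" .
  moreover have "continuous_on {0..R} f" unfolding f_def by (intro continuous_intros)
  ultimately obtain s where s: "0 \<le> s" "s \<le> R" "f s = 0"
    using IVT'[of f 0 0 R] R c unfolding f_def by auto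
  moreover have "s \<noteq> 0" using s(3) c unfolding f_def by auto
  ultimately show ?thesis unfolding f_def by (metis order_le_less)
qed

lemma common_isotropic_vector_of_conjugate_pair:
  fixes M M' :: "real^'n^'n"
  assumes symM: "symmetric_mat M" and symM': "symmetric_mat M'" and S: "subspace S"
    and "x \<in> S" "y \<in> S" "quad_form M x = 0" "quad_form M y = 0" "x \<bullet> (M *v y) = 0"
    and X: "quad_form M' x > 0" and Y: "quad_form M' y < 0"
  shows "\<exists>z\<in>S. z \<noteq> 0 \<and> quad_form M z = 0 \<and> quad_form M' z = 0"
proof -
  obtain t where t: "t > 0" "quad_form M' x + 2 * t * (x \<bullet> (M' *v y)) + t\<^sup>2 * quad_form M' y = 0"
    using quadratic_has_positive_root[OF X Y] by blast
  have "quad_form M (1 *\<^sub>R x + t *\<^sub>R y) = 0" "quad_form M' (1 *\<^sub>R x + t *\<^sub>R y) = 0"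
    unfolding quad_form_lincomb2[OF symM] quad_form_lincomb2[OF symM'] using assms(6-8) t(2) by simp_all
  moreover have "x + t *\<^sub>R y \<noteq> 0"
  proof
    assume "x + t *\<^sub>R y = 0"
    then have "quad_form M' x = t\<^sup>2 * quad_form M' y"
      using quad_form_scaleR[where M = M' and r = "- t" and x = y] by (simp add: eq_neg_iff_add_eq_0[symmetric])
    moreover have "t\<^sup>2 * quad_form M' y < 0" using t(1) Y by (simp add: mult_pos_neg)
    ultimately show False using X by simp
  qed
  moreover have "x + t *\<^sub>R y \<in> S" using S assms(4,5) by (simp add: subspace_add subspace_scale)
  ultimately show ?thesis by (intro bexI[of _ "x + t *\<^sub>R y"]) simp_all
qed

text \<open>Here \<open>z = s x + (c / s) y + w\<close> is \<open>M\<close>-isotropic for every \<open>s > 0\<close>, and \<open>s\<^sup>2 z\<^sup>T M' z\<close> is a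
  quartic in \<open>s\<close> with positive leading and negative constant coefficient.\<close>

lemma common_isotropic_vector_of_triple:
  fixes M M' :: "real^'n^'n"
  assumes symM: "symmetric_mat M" and symM': "symmetric_mat M'" and S: "subspace S"
    and "x \<in> S" "y \<in> S" "w \<in> S"
    and xM: "quad_form M x = 0" and yM: "quad_form M y = 0" and d: "x \<bullet> (M *v y) \<noteq> 0"
    and wx: "x \<bullet> (M *v w) = 0" and wy: "y \<bullet> (M *v w) = 0" and e: "quad_form M w \<noteq> 0"
    and X: "quad_form M' x > 0" and Y: "quad_form M' y < 0"
  shows "\<exists>z\<in>S. z \<noteq> 0 \<and> quad_form M z = 0 \<and> quad_form M' z = 0"
proof -
  define c where "c = - quad_form M w / (2 * (x \<bullet> (M *v y)))"
  have c: "c \<noteq> 0" "quad_form M w + 2 * c * (x \<bullet> (M *v y)) = 0"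
    unfolding c_def using d e by (simp_all add: field_simps)
  have "c\<^sup>2 * quad_form M' y < 0" using c(1) Y by (simp add: mult_pos_neg)
  then obtain s where s: "s > 0"
    "quad_form M' x * s ^ 4 + (2 * (x \<bullet> (M' *v w))) * s ^ 3
      + (quad_form M' w + 2 * c * (x \<bullet> (M' *v y))) * s ^ 2 + (2 * c * (y \<bullet> (M' *v w))) * s
      + c\<^sup>2 * quad_form M' y = 0"
    using quartic_has_positive_root[OF X] by blast
  define z where "z = s *\<^sub>R x + (c / s) *\<^sub>R y + 1 *\<^sub>R w"
  have "quad_form M z = 0"
    unfolding z_def quad_form_lincomb3[OF symM] using xM yM wx wy s(1) c(2)
    by (simp add: power2_eq_square)
  moreover have "s\<^sup>2 * quad_form M' z =
      quad_form M' x * s ^ 4 + (2 * (x \<bullet> (M' *v w))) * s ^ 3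
      + (quad_form M' w + 2 * c * (x \<bullet> (M' *v y))) * s ^ 2 + (2 * c * (y \<bullet> (M' *v w))) * s
      + c\<^sup>2 * quad_form M' y"
    unfolding z_def quad_form_lincomb3[OF symM'] using s(1)
    by (simp add: field_simps power2_eq_square power_numeral_reduce)
  then have "quad_form M' z = 0" using s by simp
  moreover have "x \<bullet> (M *v z) = (c / s) * (x \<bullet> (M *v y))"
    using xM wx unfolding z_def
    by (simp add: matrix_vector_right_distrib matrix_vector_mult_scaleR inner_add_right)
  then have "z \<noteq> 0" using s(1) c(1) d by auto
  moreover have "z \<in> S" unfolding z_def using S assms(4-6) by (simp add: subspace_add subspace_scale)
  ultimately show ?thesis by blast
qed

text \<open>In dimension at least three the \<open>M\<close>-isotropic cone is connected enough that \<open>M'\<close> cannot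
  change sign on it without vanishing: either \<open>x, y\<close> are \<open>M\<close>-conjugate, or a vector \<open>w\<close>
  \<open>M\<close>-conjugate to both of them gives a conjugate pair or a triple as above.\<close>

lemma common_isotropic_vector:
  fixes M M' :: "real^'n^'n"
  assumes symM: "symmetric_mat M" and symM': "symmetric_mat M'" and S: "subspace S"
    and dim: "dim S \<ge> 3" and x: "x \<in> S" and y: "y \<in> S"
    and xM: "quad_form M x = 0" and yM: "quad_form M y = 0"
    and X: "quad_form M' x > 0" and Y: "quad_form M' y < 0"
  shows "\<exists>z\<in>S. z \<noteq> 0 \<and> quad_form M z = 0 \<and> quad_form M' z = 0"
proof (cases "x \<bullet> (M *v y) = 0")
  case True
  then show ?thesis by (rule common_isotropic_vector_of_conjugate_pair[OF symM symM' S x y xM yM _ X Y])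
next
  case d: False
  define U where "U = {w \<in> {w \<in> S. (M *v x) \<bullet> w = 0}. (M *v y) \<bullet> w = 0}"
  have "subspace {w \<in> S. (M *v x) \<bullet> w = 0}" by (rule subspace_hyperplane_section[OF S])
  then have "dim S \<le> Suc (Suc (dim U))"
    using dim_le_Suc_hyperplane_section[OF S, of "M *v x"]
      dim_le_Suc_hyperplane_section[of "{w \<in> S. (M *v x) \<bullet> w = 0}" "M *v y"]
    unfolding U_def by linarith
  then have "dim U \<noteq> 0" using dim by linarith
  then have "\<not> U \<subseteq> {0}" by (simp add: dim_eq_0)
  then obtain w where w: "w \<in> S" "w \<noteq> 0" "(M *v x) \<bullet> w = 0" "(M *v y) \<bullet> w = 0"
    unfolding U_def by blast
  have wx: "x \<bullet> (M *v w) = 0" and wy: "y \<bullet> (M *v w) = 0" "w \<bullet> (M *v y) = 0"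
    using w(3,4) symmetric_mat_inner_commute[OF symM] by (simp_all add: inner_commute)
  consider "quad_form M w \<noteq> 0" | "quad_form M w = 0" "quad_form M' w = 0"
    | "quad_form M w = 0" "quad_form M' w > 0" | "quad_form M w = 0" "quad_form M' w < 0"
    by linarith
  then show ?thesis
  proof cases
    case 1
    then show ?thesis
      by (rule common_isotropic_vector_of_triple[OF symM symM' S x y w(1) xM yM d wx wy(1) _ X Y])
  next
    case 2
    then show ?thesis using w(1,2) by blast
  next
    case 3
    then show ?thesis
      by (intro common_isotropic_vector_of_conjugate_pair[OF symM symM' S w(1) y _ yM wy(2) _ Y])
  next
    case 4
    then show ?thesis
      by (intro common_isotropic_vector_of_conjugate_pair[OF symM symM' S x w(1) xM _ wx X])
  qed
qed

text \<open>If \<open>j(x) + j(y) = 0\<close> with \<open>j(x) = (p, q) \<noteq> 0\<close>, the rotated forms \<open>q A - p B\<close> and \<open>p A + q B\<close>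
  put \<open>x, y\<close> on the isotropic cone of the first and give them opposite signs under the second.\<close>

lemma joint_form_image_pointed:
  fixes A B :: "real^'n^'n"
  assumes symA: "symmetric_mat A" and symB: "symmetric_mat B" and S: "subspace S"
    and dim: "dim S \<noteq> 2"
    and anisotropic: "\<And>z. z \<in> S \<Longrightarrow> joint_form A B z = 0 \<Longrightarrow> z = 0"
    and x: "x \<in> S" and y: "y \<in> S" and sum: "joint_form A B x + joint_form A B y = 0"
  shows "joint_form A B x = 0"
proof (rule ccontr)
  assume jx: "joint_form A B x \<noteq> 0"
  then have "x \<noteq> 0" by (auto simp: joint_form_def complex_eq_iff)
  show False
  proof (cases "dim S \<le> 1")
    case True
    then have "span {x} = span S" using x \<open>x \<noteq> 0\<close> by (intro dim_eq_span) auto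
    moreover have "y \<in> span S" using y by (rule span_base)
    ultimately obtain k where "y = k *\<^sub>R x" by (auto simp: span_singleton)
    then have "(1 + k\<^sup>2) *\<^sub>R joint_form A B x = 0"
      using sum by (simp add: joint_form_scaleR algebra_simps)
    moreover have "1 + k\<^sup>2 > 0" by (simp add: add_pos_nonneg)
    ultimately show False using jx by simp
  next
    case False
    define p where "p = quad_form A x"
    define q where "q = quad_form B x"
    have pq: "p \<noteq> 0 \<or> q \<noteq> 0" using jx unfolding p_def q_def by (simp add: joint_form_def complex_eq_iff)
    then have "p\<^sup>2 + q\<^sup>2 > 0" by (simp add: sum_power2_gt_zero_iff)
    have y': "quad_form A y = - p" "quad_form B y = - q"
      using sum unfolding p_def q_def by (simp_all add: joint_form_def complex_eq_iff)
    define M where "M = q *\<^sub>R A + (- p) *\<^sub>R B"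
    define M' where "M' = p *\<^sub>R A + q *\<^sub>R B"
    have "\<exists>z\<in>S. z \<noteq> 0 \<and> quad_form M z = 0 \<and> quad_form M' z = 0"
    proof (rule common_isotropic_vector[OF _ _ S _ x y])
      show "symmetric_mat M" "symmetric_mat M'"
        unfolding M_def M'_def by (rule symmetric_mat_lincomb[OF symA symB])+
      show "3 \<le> dim S" using dim False by linarith
      show "quad_form M x = 0" "quad_form M y = 0" "quad_form M' x > 0" "quad_form M' y < 0"
        unfolding M_def M'_def inner_matrix_vector_lincomb y' p_def[symmetric] q_def[symmetric]
        using \<open>p\<^sup>2 + q\<^sup>2 > 0\<close> by (simp_all add: power2_eq_square algebra_simps)
    qed
    then obtain z where z: "z \<in> S" "z \<noteq> 0"
      "p * quad_form A z + q * quad_form B z = 0" "q * quad_form A z - p * quad_form B z = 0"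
      unfolding M_def M'_def inner_matrix_vector_lincomb by auto
    then have "joint_form A B z = 0"
      using lincomb_rotation_eq_0[OF pq z(3,4)] by (simp add: joint_form_def complex_eq_iff)
    then show False using anisotropic z(1,2) by blast
  qed
qed

lemma zero_notin_convex_hull_joint_form_sphere:
  fixes A B :: "real^'n^'n"
  assumes symA: "symmetric_mat A" and symB: "symmetric_mat B" and S: "subspace S"
    and dim: "dim S \<noteq> 2"
    and anisotropic: "\<And>z. z \<in> S \<Longrightarrow> joint_form A B z = 0 \<Longrightarrow> z = 0"
  shows "0 \<notin> convex hull (joint_form A B ` (S \<inter> sphere 0 1))"
proof
  assume "0 \<in> convex hull (joint_form A B ` (S \<inter> sphere 0 1))"
  then obtain F u where F: "finite F" "F \<subseteq> joint_form A B ` (S \<inter> sphere 0 1)"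
    "\<forall>v\<in>F. 0 \<le> u v" "sum u F = 1" "(\<Sum>v\<in>F. u v *\<^sub>R v) = 0"
    unfolding convex_hull_explicit by blast
  have "\<exists>v\<in>F. u v \<noteq> 0"
  proof (rule ccontr)
    assume "\<not> (\<exists>v\<in>F. u v \<noteq> 0)"
    then have "sum u F = 0" by simp
    with F(4) show False by simp
  qed
  then obtain v where v: "v \<in> F" "u v > 0" using F(3) by force
  obtain x where "x \<in> S \<inter> sphere 0 1" "v = joint_form A B x" using F(2) v(1) by blast
  then have x: "x \<in> S" "x \<noteq> 0" "v = joint_form A B x" by auto
  define x' where "x' = sqrt (u v) *\<^sub>R x"
  have x': "x' \<in> S" "x' \<noteq> 0" "joint_form A B x' = u v *\<^sub>R v"
    unfolding x'_def using S x v(2) by (simp_all add: subspace_scale joint_form_scaleR_sqrt)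
  obtain z where z: "z \<in> S" "joint_form A B z = (\<Sum>v\<in>F - {v}. u v *\<^sub>R v)"
    using joint_form_nonneg_combination_in_image[OF symA symB S, of "F - {v}" u] F(1-3) by blast
  have "joint_form A B x' + joint_form A B z = 0"
    using F(1,5) v(1) x'(3) z(2) by (simp add: sum.remove)
  then have "joint_form A B x' = 0"
    using joint_form_image_pointed[OF symA symB S dim anisotropic x'(1) z(1)] by blast
  then show False using anisotropic x'(1,2) by blast
qed

text \<open>A line separating \<open>0\<close> from the convex hull of the joint numerical range of the unit sphere
  of \<open>S\<close> gives a member of the pencil that is positive definite on \<open>S\<close>.\<close>

lemma definite_pencil_on_subspace:
  fixes A B :: "real^'n^'n"
  assumes symA: "symmetric_mat A" and symB: "symmetric_mat B" and S: "subspace S"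
    and dim: "dim S \<noteq> 2"
    and anisotropic: "\<And>z. z \<in> S \<Longrightarrow> joint_form A B z = 0 \<Longrightarrow> z = 0"
  obtains a b where "a \<noteq> 0 \<or> b \<noteq> 0" "\<And>x. x \<in> S \<Longrightarrow> x \<noteq> 0 \<Longrightarrow> quad_form (a *\<^sub>R A + b *\<^sub>R B) x > 0"
proof -
  define D where "D = convex hull (joint_form A B ` (S \<inter> sphere 0 1))"
  have "compact (S \<inter> sphere 0 1)" using S by (simp add: closed_subspace closed_Int_compact Int_commute)
  then have "compact D"
    unfolding D_def by (intro compact_convex_hull compact_continuous_image continuous_on_joint_form)
  moreover have "0 \<notin> D"
    unfolding D_def by (rule zero_notin_convex_hull_joint_form_sphere[OF assms])
  ultimately obtain a :: complex and r where ar: "a \<noteq> 0" "0 < r" "\<forall>z\<in>D. r < a \<bullet> z"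
    using separating_hyperplane_closed_0[of D] compact_imp_closed unfolding D_def by blast
  have "quad_form (Re a *\<^sub>R A + Im a *\<^sub>R B) x > 0" if "x \<in> S" "x \<noteq> 0" for x
  proof -
    define t where "t = 1 / norm x"
    have "t *\<^sub>R x \<in> S \<inter> sphere 0 1" unfolding t_def using that S by (simp add: subspace_scale)
    then have "joint_form A B (t *\<^sub>R x) \<in> D" unfolding D_def by (blast intro: hull_inc)
    then have "0 < a \<bullet> joint_form A B (t *\<^sub>R x)" using ar(2,3) by fastforce
    also have "a \<bullet> joint_form A B (t *\<^sub>R x) = t\<^sup>2 * quad_form (Re a *\<^sub>R A + Im a *\<^sub>R B) x"
      unfolding joint_form_scaleR inner_matrix_vector_lincomb
      by (simp add: joint_form_def inner_complex_def algebra_simps)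
    finally show ?thesis by (simp add: zero_less_mult_iff)
  qed
  moreover have "Re a \<noteq> 0 \<or> Im a \<noteq> 0" using ar(1) by (simp add: complex_eq_iff)
  ultimately show ?thesis using that by blast
qed

lemma quad_form_orthogonal_comp_kernel:
  fixes P :: "real^'n^'n"
  assumes symP: "symmetric_mat P" and W: "subspace W" and ker: "\<And>w. w \<in> W \<Longrightarrow> P *v w = 0"
  shows "\<exists>s\<in>orthogonal_comp W. quad_form P x = quad_form P s \<and> x - s \<in> W"
proof -
  have "x \<in> W + orthogonal_comp W" using subspace_sum_orthogonal_comp[OF W] by auto
  then obtain w s where ws: "w \<in> W" "s \<in> orthogonal_comp W" "x = w + s" by (meson set_plus_elim)
  have "w \<bullet> (P *v s) = 0" using ker[OF ws(1)] symmetric_mat_inner_commute[OF symP, of w s] by simp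
  then have "quad_form P x = quad_form P s"
    using ker[OF ws(1)] unfolding ws(3) by (simp add: matrix_vector_right_distrib inner_add_left)
  with ws show ?thesis by auto
qed

lemma simul_diag_congruence_if_Qset_eq_Nset:
  fixes A B :: "real^'n^'n"
  assumes symA: "symmetric_mat A" and symB: "symmetric_mat B"
    and Q: "Qset A \<inter> Qset B = Nset A \<inter> Nset B"
    and dim: "int (dim (Nset A \<inter> Nset B)) \<noteq> int CARD('n) - 2"
  shows "simul_diag_congruence A B"
proof -
  define W where "W = Nset A \<inter> Nset B"
  define S where "S = orthogonal_comp W"
  have W: "subspace W" unfolding W_def by (rule subspace_common_kernel)
  have S: "subspace S" unfolding S_def by (rule subspace_orthogonal_comp)
  have "dim S + dim W = CARD('n)" unfolding S_def by (rule dim_orthogonal_comp_add[OF W])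
  then have "dim S \<noteq> 2" using dim unfolding W_def by linarith
  moreover have "z = 0" if "z \<in> S" "joint_form A B z = 0" for z
    using that Q orthogonal_Int_0[OF W] unfolding joint_form_eq_0_iff S_def W_def by blast
  ultimately obtain a b where ab: "a \<noteq> 0 \<or> b \<noteq> 0"
      and pos: "\<And>x. x \<in> S \<Longrightarrow> x \<noteq> 0 \<Longrightarrow> quad_form (a *\<^sub>R A + b *\<^sub>R B) x > 0"
    using definite_pencil_on_subspace[OF symA symB S] by blast
  define P where "P = a *\<^sub>R A + b *\<^sub>R B"
  have symP: "symmetric_mat P" unfolding P_def by (rule symmetric_mat_lincomb[OF symA symB])
  have decomp: "\<exists>s\<in>S. quad_form P x = quad_form P s \<and> x - s \<in> W" for x
    unfolding S_def
  proof (rule quad_form_orthogonal_comp_kernel[OF symP W])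
    show "P *v w = 0" if "w \<in> W" for w
      using that unfolding P_def W_def Nset_def matrix_vector_mult_lincomb by simp
  qed
  show ?thesis
  proof (rule simul_diag_congruence_if_semidefinite_pencil[OF symA symB ab])
    show "psd (a *\<^sub>R A + b *\<^sub>R B)"
      unfolding psd_def P_def[symmetric]
    proof
      fix x
      obtain s where "s \<in> S" "quad_form P x = quad_form P s" using decomp by blast
      then show "0 \<le> quad_form P x" using pos[of s] unfolding P_def by (cases "s = 0") auto
    qed
    show "x \<in> Nset A \<inter> Nset B" if "quad_form (a *\<^sub>R A + b *\<^sub>R B) x = 0" for x
    proof -
      obtain s where s: "s \<in> S" "quad_form P x = quad_form P s" "x - s \<in> W" using decomp by blast
      have "s = 0"
      proof (rule ccontr)
        assume "s \<noteq> 0"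
        with pos[OF s(1)] s(2) that show False unfolding P_def by simp
      qed
      with s(3) show ?thesis unfolding W_def by simp
    qed
  qed
qed

theorem corollary1:
  fixes A B :: "real^'n^'n"
  assumes "symmetric_mat A" and "symmetric_mat B"
    and "(\<exists>s t. s \<in> I_psd A B \<and> t \<in> I_psd A B \<and> s \<noteq> t)
       \<or> (\<exists>s t. s \<in> I_psd B A \<and> t \<in> I_psd B A \<and> s \<noteq> t)
       \<or> (Qset A \<inter> Qset B = Nset A \<inter> Nset B
          \<and> int (dim (Nset A \<inter> Nset B)) \<noteq> int CARD('n) - 2)"
  shows "simul_diag_congruence A B"
  using assms(3)
proof (elim disjE exE conjE)
  fix s t assume "s \<in> I_psd A B" "t \<in> I_psd A B" "s \<noteq> t"
  then show ?thesis by (rule simul_diag_congruence_if_I_psd_two_points[OF assms(1,2)])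
next
  fix s t assume "s \<in> I_psd B A" "t \<in> I_psd B A" "s \<noteq> t"
  then have "simul_diag_congruence B A"
    by (rule simul_diag_congruence_if_I_psd_two_points[OF assms(2,1)])
  then show ?thesis by (rule simul_diag_congruence_commute)
next
  assume "Qset A \<inter> Qset B = Nset A \<inter> Nset B" "int (dim (Nset A \<inter> Nset B)) \<noteq> int CARD('n) - 2"
  then show ?thesis by (rule simul_diag_congruence_if_Qset_eq_Nset[OF assms(1,2)])
qed

end
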